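(* Let $U$ be a Hilbert space, $T: U\rightrightarrows U$, $(\hat u,\hat w)\in\operatorname{graph}T$, and $P,N,M\in\mathcal{L}(U;U)$ with $M\ge P\ge0$. If $(P,M-P)\in\mathcal{P}(T^{-1}(\hat w),\hat u)$, then $(N,P)$-subregularity of $T$ at $(\hat u,\hat w)$ implies $(P,N,M)$-partial subregularity at the same point. If $T^{-1}(\hat w)=\{\hat u\}$ is a singleton, these two properties are equivalent.
   Context: For $T\in\mathcal{L}(U;U)$: $\|x\|^2_T:=\langle Tx,x\rangle$, $\operatorname{dist}^2_T(z,A):=\inf_{u\in A}\|z-u\|^2_T$ ($\inf\emptyset=+\infty$); $T\ge S$ means $T-S$ positive semidefinite. For $M,P,N\in\mathcal{L}(U;U)$ with $N\ge0$, $M\ge0$, $M\ge P$, $T$ is $(P,N,M)$-partially subregular at $(\hat u,\hat w)$ if there is a neighbourhood $\mathcal{U}\ni\hat u$ with $\operatorname{dist}^2_N(\hat w,T(u)) + \operatorname{dist}^2_{M-P}(u,T^{-1}(\hat w))\ge\operatorname{dist}^2_M(u,T^{-1}(\hat w))$ for all $u\in\mathcal{U}$. $T$ is $(N,M)$-subregular if it is $(M,N,M)$-partially subregular. For $M,M'\in\mathcal{L}(U;U)$, $A\subset U$, $\hat u\in A$: $(M,M')\in\mathcal{P}(A,\hat u)$ means there is a neighbourhood $\mathcal{U}'\ni\hat u$ such that each $u\in\mathcal{U}'$ has a common projection onto $A$ with respect to $\|\cdot\|_M$ and $\|\cdot\|_{M'}$. *)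

theory Defs
  imports "HOL-Analysis.Analysis"
begin

definition opnormsq :: "('a::real_inner \<Rightarrow> 'a) \<Rightarrow> 'a \<Rightarrow> real" where
  "opnormsq T x = inner (T x) x"

text \<open>Squared distance w.r.t. T; the infimum over the empty set is +infinity.\<close>
definition opdistsq :: "('a::real_inner \<Rightarrow> 'a) \<Rightarrow> 'a \<Rightarrow> 'a set \<Rightarrow> ereal" where
  "opdistsq T z A = (INF u\<in>A. ereal (opnormsq T (z - u)))"

definition psd :: "('a::real_inner \<Rightarrow> 'a) \<Rightarrow> bool" where
  "psd T \<longleftrightarrow> (\<forall>x. 0 \<le> inner (T x) x)"

definition op_ge :: "('a::real_inner \<Rightarrow> 'a) \<Rightarrow> ('a \<Rightarrow> 'a) \<Rightarrow> bool" where
  "op_ge T S \<longleftrightarrow> psd (\<lambda>x. T x - S x)"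

definition setinv :: "('a \<Rightarrow> 'b set) \<Rightarrow> 'b \<Rightarrow> 'a set" where
  "setinv T w = {u. w \<in> T u}"

definition partially_subregular ::
  "('a::real_inner \<Rightarrow> 'a) \<Rightarrow> ('a \<Rightarrow> 'a) \<Rightarrow> ('a \<Rightarrow> 'a) \<Rightarrow> ('a \<Rightarrow> 'a set) \<Rightarrow> 'a \<Rightarrow> 'a \<Rightarrow> bool" where
  "partially_subregular P N M T uh wh \<longleftrightarrow>
     psd N \<and> psd M \<and> op_ge M P \<and>
     (\<exists>U. open U \<and> uh \<in> U \<and>
        (\<forall>u\<in>U. opdistsq N wh (T u) + opdistsq (\<lambda>x. M x - P x) u (setinv T wh)
                 \<ge> opdistsq M u (setinv T wh)))"

definition subregular ::
  "('a::real_inner \<Rightarrow> 'a) \<Rightarrow> ('a \<Rightarrow> 'a) \<Rightarrow> ('a \<Rightarrow> 'a set) \<Rightarrow> 'a \<Rightarrow> 'a \<Rightarrow> bool" where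
  "subregular N M T uh wh \<longleftrightarrow> partially_subregular M N M T uh wh"

definition is_projection :: "('a::real_inner \<Rightarrow> 'a) \<Rightarrow> 'a set \<Rightarrow> 'a \<Rightarrow> 'a \<Rightarrow> bool" where
  "is_projection M A u p \<longleftrightarrow> p \<in> A \<and> (\<forall>a\<in>A. opnormsq M (u - p) \<le> opnormsq M (u - a))"

definition common_proj_class ::
  "('a::real_inner \<Rightarrow> 'a) \<Rightarrow> ('a \<Rightarrow> 'a) \<Rightarrow> 'a set \<Rightarrow> 'a \<Rightarrow> bool" where
  "common_proj_class M M' A uh \<longleftrightarrow> uh \<in> A \<and>
     (\<exists>U'. open U' \<and> uh \<in> U' \<and>
        (\<forall>u\<in>U'. \<exists>p. is_projection M A u p \<and> is_projection M' A u p))"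

end

theory Submission
  imports Defs
begin

text \<open>The squared norm of M splits as that of P plus that of M - P. If the nearest
  point p of the solution set is the same for the P- and the (M - P)-seminorm, the
  split passes to squared distances, and the P-part is controlled by (N,P)-subregularity;
  this gives (P,N,M)-partial subregularity. For a singleton solution set every point
  is a common projection and the split is an identity, so the implication reverses
  by cancelling the finite (M - P)-term.\<close>

lemma opdistsq_singleton: "opdistsq T z {a} = ereal (opnormsq T (z - a))"
  by (simp add: opdistsq_def)

lemma opdistsq_le_opnormsq: "a \<in> A \<Longrightarrow> opdistsq M u A \<le> ereal (opnormsq M (u - a))"
  unfolding opdistsq_def by (rule INF_lower)

lemma opdistsq_projection:
  assumes "is_projection M A u p"
  shows "opdistsq M u A = ereal (opnormsq M (u - p))"
proof -
  have p: "p \<in> A" and le: "\<And>a. a \<in> A \<Longrightarrow> opnormsq M (u - p) \<le> opnormsq M (u - a)"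
    using assms by (auto simp: is_projection_def)
  show ?thesis unfolding opdistsq_def
    by (rule antisym) (auto intro!: INF_lower2[OF p] INF_greatest simp: le)
qed

lemma opdistsq_diff_self: "A \<noteq> {} \<Longrightarrow> opdistsq (\<lambda>x. P x - P x) u A = 0"
  by (simp add: opdistsq_def opnormsq_def zero_ereal_def)

lemma opnormsq_split: "opnormsq M x = opnormsq P x + opnormsq (\<lambda>x. M x - P x) x"
  by (simp add: opnormsq_def inner_diff_left)

lemma psd_if_op_ge: "op_ge M P \<Longrightarrow> psd P \<Longrightarrow> psd M"
  unfolding op_ge_def psd_def
  by (metis add_increasing2 diff_add_cancel inner_diff_left)

lemma op_ge_refl: "op_ge P P"
  by (simp add: op_ge_def psd_def)

lemma opdistsq_le_add_common_projection:
  assumes "is_projection P A u p" and "is_projection (\<lambda>x. M x - P x) A u p"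
  shows "opdistsq M u A \<le> opdistsq P u A + opdistsq (\<lambda>x. M x - P x) u A"
proof -
  have "p \<in> A" using assms(1) by (simp add: is_projection_def)
  then have "opdistsq M u A \<le> ereal (opnormsq M (u - p))"
    by (rule opdistsq_le_opnormsq)
  also have "\<dots> = ereal (opnormsq P (u - p)) + ereal (opnormsq (\<lambda>x. M x - P x) (u - p))"
    using opnormsq_split[of M "u - p" P] by simp
  also have "\<dots> = opdistsq P u A + opdistsq (\<lambda>x. M x - P x) u A"
    using opdistsq_projection[OF assms(1)] opdistsq_projection[OF assms(2)] by simp
  finally show ?thesis .
qed

lemma common_proj_class_singleton: "common_proj_class M M' {uh} uh"
  unfolding common_proj_class_def
  by (intro conjI exI[of _ UNIV]) (auto simp: is_projection_def)

lemma subregular_iff: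
  assumes "setinv T wh \<noteq> {}"
  shows "subregular N P T uh wh \<longleftrightarrow> psd N \<and> psd P \<and>
    (\<exists>U. open U \<and> uh \<in> U \<and> (\<forall>u\<in>U. opdistsq P u (setinv T wh) \<le> opdistsq N wh (T u)))"
  unfolding subregular_def partially_subregular_def opdistsq_diff_self[OF assms]
  by (simp add: op_ge_refl)

lemma partially_subregular_if_subregular:
  assumes graph: "wh \<in> T uh" and MP: "op_ge M P" and P0: "psd P"
    and proj: "common_proj_class P (\<lambda>x. M x - P x) (setinv T wh) uh"
    and "subregular N P T uh wh"
  shows "partially_subregular P N M T uh wh"
proof -
  let ?S = "setinv T wh"
  have "?S \<noteq> {}" using graph by (auto simp: setinv_def)
  with \<open>subregular N P T uh wh\<close> obtain U where N0: "psd N" and U: "open U" "uh \<in> U"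
    and bound: "\<And>u. u \<in> U \<Longrightarrow> opdistsq P u ?S \<le> opdistsq N wh (T u)"
    by (auto simp: subregular_iff)
  from proj obtain U' where U': "open U'" "uh \<in> U'"
    and common: "\<And>u. u \<in> U' \<Longrightarrow>
      \<exists>p. is_projection P ?S u p \<and> is_projection (\<lambda>x. M x - P x) ?S u p"
    unfolding common_proj_class_def by blast
  have "opdistsq M u ?S \<le> opdistsq N wh (T u) + opdistsq (\<lambda>x. M x - P x) u ?S"
    if u: "u \<in> U \<inter> U'" for u
  proof -
    obtain p where "is_projection P ?S u p" "is_projection (\<lambda>x. M x - P x) ?S u p"
      using common u by blast
    then have "opdistsq M u ?S \<le> opdistsq P u ?S + opdistsq (\<lambda>x. M x - P x) u ?S"
      by (rule opdistsq_le_add_common_projection)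
    also have "\<dots> \<le> opdistsq N wh (T u) + opdistsq (\<lambda>x. M x - P x) u ?S"
      using bound u by (intro add_right_mono) auto
    finally show ?thesis .
  qed
  moreover have "open (U \<inter> U')" "uh \<in> U \<inter> U'" using U U' by auto
  ultimately show ?thesis
    unfolding partially_subregular_def using N0 psd_if_op_ge[OF MP P0] MP by blast
qed

lemma subregular_if_partially_subregular_singleton:
  assumes single: "setinv T wh = {uh}" and P0: "psd P"
    and "partially_subregular P N M T uh wh"
  shows "subregular N P T uh wh"
proof -
  obtain U where N0: "psd N" and U: "open U" "uh \<in> U"
    and bound: "\<And>u. u \<in> U \<Longrightarrow> ereal (opnormsq M (u - uh))
      \<le> opdistsq N wh (T u) + ereal (opnormsq (\<lambda>x. M x - P x) (u - uh))"
    using assms(3) unfolding partially_subregular_def single opdistsq_singleton by blast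
  have "opdistsq P u {uh} \<le> opdistsq N wh (T u)" if u: "u \<in> U" for u
  proof -
    have "ereal (opnormsq P (u - uh)) + ereal (opnormsq (\<lambda>x. M x - P x) (u - uh))
      \<le> opdistsq N wh (T u) + ereal (opnormsq (\<lambda>x. M x - P x) (u - uh))"
      using bound[OF u] opnormsq_split[of M "u - uh" P] by simp
    then show ?thesis
      by (simp only: ereal_add_le_add_iff2 opdistsq_singleton) simp
  qed
  with N0 P0 U show ?thesis
    by (subst subregular_iff) (auto simp: single)
qed

theorem proposition4p5:
  fixes T :: "'a::{real_inner, complete_space} \<Rightarrow> 'a set"
    and P N M :: "'a \<Rightarrow> 'a" and uh wh :: 'a
  assumes graph: "wh \<in> T uh"
    and linP: "bounded_linear P" and linN: "bounded_linear N" and linM: "bounded_linear M"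
    and MP: "op_ge M P" and P0: "psd P"
  shows "(common_proj_class P (\<lambda>x. M x - P x) (setinv T wh) uh \<longrightarrow>
            (subregular N P T uh wh \<longrightarrow> partially_subregular P N M T uh wh))
       \<and> (setinv T wh = {uh} \<longrightarrow>
            (subregular N P T uh wh \<longleftrightarrow> partially_subregular P N M T uh wh))"
proof (intro conjI impI)
  show "partially_subregular P N M T uh wh"
    if "common_proj_class P (\<lambda>x. M x - P x) (setinv T wh) uh" "subregular N P T uh wh"
    using graph MP P0 that by (rule partially_subregular_if_subregular)
next
  assume single: "setinv T wh = {uh}"
  show "subregular N P T uh wh \<longleftrightarrow> partially_subregular P N M T uh wh"
    using partially_subregular_if_subregular[of wh T uh M P N, OF graph MP P0]
      subregular_if_partially_subregular_singleton[OF single P0]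
      common_proj_class_singleton[of P "\<lambda>x. M x - P x" uh]
    by (auto simp: single)
qed

end
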